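(* Let $\mathcal{C}$ be a translation based cipher over $V=(\mathbb{F}_2)^{mn}$ with $m\ge3$ and $n\ge2$. Suppose that there is a brick $\gamma_i$ (acting on $V_i$) of the bricklayer transformation of a proper round $h$ such that $$\mathrm{Alt}(V_i)\subseteq\langle T(V_i),\ \gamma_iT(V_i)\gamma_i^{-1}\rangle.$$ If $\Gamma_h(\mathcal{C})$ is primitive, then it is not of affine type, i.e. $\Gamma_h(\mathcal{C})$ is not contained in $\mathrm{AGL}(mn,2)$ (the affine group of $V$).
   Context: Permutations act on the right. Let $m,n>1$ and $V=V_1\oplus\dots\oplus V_n$ with each $V_i\cong(\mathbb{F}_2)^m$. For $v$ in a vector space $X$, $\sigma_v$ is $x\mapsto x+v$ and $T(X)=\{\sigma_v:v\in X\}$. A bricklayer transformation is a permutation $\gamma$ of $V$ with permutations ("bricks") $\gamma_i$ of $V_i$ such that $(v_1+\dots+v_n)\gamma=v_1\gamma_1+\dots+v_n\gamma_n$. A wall is a nontrivial proper subspace of $V$ that is a sum of some $V_i$; $\lambda\in\mathrm{GL}(V)$ is a proper mixing layer if no wall is $\lambda$-invariant. A tb cipher $\mathcal{C}=\{\tau_k:k\in\mathcal{K}\}$ has $\tau_k=\tau_{k,1}\cdots\tau_{k,l}$ with $\tau_{k,h}=\gamma_h\lambda_h\sigma_{\phi(k,h)}$, $\gamma_h$ a key-independent bricklayer transformation with $0\gamma_h=0$, $\lambda_h\in\mathrm{GL}(V)$ key-independent, $\phi:\mathcal{K}\times\{1,\dots,l\}\to V$; a round $h$ is proper if $\lambda_h$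 is a proper mixing layer and $k\mapsto\phi(k,h)$ is onto $V$, and a tb cipher has at least one proper round. $\Gamma_h(\mathcal{C})=\langle\tau_{k,h}:k\in\mathcal{K}\rangle$. *)

theory Defs
  imports "HOL-Combinatorics.Permutations"
begin

text \<open>A brick space V_i = (F_2)^m is represented by the set Bcar m of
  bit vectors nat => bool vanishing outside {0..<m}; the whole space V = V_0 + ... + V_(n-1)
  is represented by Vcar m n, functions nat => nat => bool (brick index, bit index)
  vanishing outside {0..<n} x {0..<m}.
  Permutations of a carrier C are functions that are bijective on C and the identity
  outside C (i.e. they satisfy p permutes C); composition f o g means apply g first.\<close>

type_synonym bvec = "nat \<Rightarrow> bool"
type_synonym vvec = "nat \<Rightarrow> nat \<Rightarrow> bool"

definition Bcar :: "nat \<Rightarrow> bvec set" where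
  "Bcar m = {v. \<forall>j. m \<le> j \<longrightarrow> \<not> v j}"

definition Vcar :: "nat \<Rightarrow> nat \<Rightarrow> vvec set" where
  "Vcar m n = {x. \<forall>i j. (n \<le> i \<or> m \<le> j) \<longrightarrow> \<not> x i j}"

definition badd :: "bvec \<Rightarrow> bvec \<Rightarrow> bvec" where
  "badd u v = (\<lambda>j. u j \<noteq> v j)"

definition vadd :: "vvec \<Rightarrow> vvec \<Rightarrow> vvec" where
  "vadd x y = (\<lambda>i j. x i j \<noteq> y i j)"

definition bzero :: bvec where "bzero = (\<lambda>_. False)"
definition vzero :: vvec where "vzero = (\<lambda>_ _. False)"

definition rperm :: "'a set \<Rightarrow> ('a \<Rightarrow> 'a) \<Rightarrow> 'a \<Rightarrow> 'a" where
  "rperm C f = (\<lambda>x. if x \<in> C then f x else x)"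

definition btrans :: "nat \<Rightarrow> bvec \<Rightarrow> bvec \<Rightarrow> bvec" where
  "btrans m v = rperm (Bcar m) (\<lambda>u. badd u v)"

definition vtrans :: "nat \<Rightarrow> nat \<Rightarrow> vvec \<Rightarrow> vvec \<Rightarrow> vvec" where
  "vtrans m n v = rperm (Vcar m n) (\<lambda>x. vadd x v)"

definition BT :: "nat \<Rightarrow> (bvec \<Rightarrow> bvec) set" where
  "BT m = btrans m ` Bcar m"

inductive_set perm_gen :: "('a \<Rightarrow> 'a) set \<Rightarrow> ('a \<Rightarrow> 'a) set" for S where
  gen_id: "id \<in> perm_gen S"
| gen_base: "s \<in> S \<Longrightarrow> s \<in> perm_gen S"
| gen_comp: "a \<in> perm_gen S \<Longrightarrow> b \<in> perm_gen S \<Longrightarrow> a \<circ> b \<in> perm_gen S"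
| gen_inv: "a \<in> perm_gen S \<Longrightarrow> inv a \<in> perm_gen S"

definition Alt :: "'a set \<Rightarrow> ('a \<Rightarrow> 'a) set" where
  "Alt C = {p. p permutes C \<and> evenperm p}"

definition bricklayer :: "nat \<Rightarrow> nat \<Rightarrow> (nat \<Rightarrow> bvec \<Rightarrow> bvec) \<Rightarrow> vvec \<Rightarrow> vvec" where
  "bricklayer m n g = rperm (Vcar m n) (\<lambda>x i. if i < n then g i (x i) else bzero)"

text \<open>GL(V): F_2-linear (= additive) bijections of V.\<close>
definition GLV :: "nat \<Rightarrow> nat \<Rightarrow> (vvec \<Rightarrow> vvec) \<Rightarrow> bool" where
  "GLV m n L \<longleftrightarrow> bij_betw L (Vcar m n) (Vcar m n) \<and>
     (\<forall>x\<in>Vcar m n. \<forall>y\<in>Vcar m n. L (vadd x y) = vadd (L x) (L y))"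

definition wall :: "nat \<Rightarrow> nat \<Rightarrow> nat set \<Rightarrow> vvec set" where
  "wall m n I = {x \<in> Vcar m n. \<forall>i. i \<notin> I \<longrightarrow> x i = bzero}"

definition proper_mixing :: "nat \<Rightarrow> nat \<Rightarrow> (vvec \<Rightarrow> vvec) \<Rightarrow> bool" where
  "proper_mixing m n L \<longleftrightarrow> GLV m n L \<and>
     (\<forall>I. I \<subseteq> {..<n} \<and> I \<noteq> {} \<and> I \<noteq> {..<n} \<longrightarrow> \<not> (L ` wall m n I \<subseteq> wall m n I))"

text \<open>Round function tau_{k,h} = gamma_h lambda_h sigma_{phi(k,h)} (right action:
  first gamma_h, then lambda_h, then the translation).\<close>
definition round_fun :: "nat \<Rightarrow> nat \<Rightarrow> (nat \<Rightarrow> nat \<Rightarrow> bvec \<Rightarrow> bvec) \<Rightarrow> (nat \<Rightarrow> vvec \<Rightarrow> vvec)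
    \<Rightarrow> ('k \<Rightarrow> nat \<Rightarrow> vvec) \<Rightarrow> 'k \<Rightarrow> nat \<Rightarrow> vvec \<Rightarrow> vvec" where
  "round_fun m n g lam phi k h =
     rperm (Vcar m n) (vtrans m n (phi k h) \<circ> lam h \<circ> bricklayer m n (g h))"

definition Gamma :: "nat \<Rightarrow> nat \<Rightarrow> (nat \<Rightarrow> nat \<Rightarrow> bvec \<Rightarrow> bvec) \<Rightarrow> (nat \<Rightarrow> vvec \<Rightarrow> vvec)
    \<Rightarrow> ('k \<Rightarrow> nat \<Rightarrow> vvec) \<Rightarrow> 'k set \<Rightarrow> nat \<Rightarrow> (vvec \<Rightarrow> vvec) set" where
  "Gamma m n g lam phi K h = perm_gen ((\<lambda>k. round_fun m n g lam phi k h) ` K)"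

definition proper_round :: "nat \<Rightarrow> nat \<Rightarrow> (nat \<Rightarrow> vvec \<Rightarrow> vvec)
    \<Rightarrow> ('k \<Rightarrow> nat \<Rightarrow> vvec) \<Rightarrow> 'k set \<Rightarrow> nat \<Rightarrow> bool" where
  "proper_round m n lam phi K h \<longleftrightarrow>
     proper_mixing m n (lam h) \<and> (\<lambda>k. phi k h) ` K = Vcar m n"

text \<open>Translation based cipher with l rounds (rounds indexed 1..l), key set K,
  bricks g h i (round h, brick i < n), mixing layers lam h, key schedule phi.\<close>
definition tb_cipher :: "nat \<Rightarrow> nat \<Rightarrow> nat \<Rightarrow> 'k set \<Rightarrow> (nat \<Rightarrow> nat \<Rightarrow> bvec \<Rightarrow> bvec)
    \<Rightarrow> (nat \<Rightarrow> vvec \<Rightarrow> vvec) \<Rightarrow> ('k \<Rightarrow> nat \<Rightarrow> vvec) \<Rightarrow> bool" where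
  "tb_cipher m n l K g lam phi \<longleftrightarrow>
     1 < m \<and> 1 < n \<and>
     (\<forall>h\<in>{1..l}.
        (\<forall>i<n. g h i permutes Bcar m) \<and>
        bricklayer m n (g h) vzero = vzero \<and>
        GLV m n (lam h) \<and>
        (\<forall>k\<in>K. phi k h \<in> Vcar m n)) \<and>
     (\<exists>h\<in>{1..l}. proper_round m n lam phi K h)"

definition primitive_on :: "'a set \<Rightarrow> ('a \<Rightarrow> 'a) set \<Rightarrow> bool" where
  "primitive_on C G \<longleftrightarrow> C \<noteq> {} \<and>
     (\<forall>x\<in>C. \<forall>y\<in>C. \<exists>g\<in>G. g x = y) \<and>
     (\<forall>B. B \<subseteq> C \<and> B \<noteq> {} \<and> (\<forall>g\<in>G. g ` B = B \<or> g ` B \<inter> B = {})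
          \<longrightarrow> card B = 1 \<or> B = C)"

definition AGL :: "nat \<Rightarrow> nat \<Rightarrow> (vvec \<Rightarrow> vvec) set" where
  "AGL m n = {f. \<exists>L b. GLV m n L \<and> b \<in> Vcar m n \<and>
       f = rperm (Vcar m n) (\<lambda>x. vadd (L x) b)}"

end

theory Submission
  imports Defs
begin

text \<open>If the round group were affine, the round function for a key whose round key is zero
  (such a key exists since the round is proper) would be an affine map fixing zero, hence
  linear. As the mixing layer is linear and injective, the bricklayer transformation, and
  with it each brick, would be additive. Conjugating translations by an additive permutation
  yields translations, so the group generated by T(V_i) and its conjugate would be T(V_i)
  itself. But the only translation fixing zero is the identity, whereas Alt(V_i) contains a
  3-cycle fixing zero.\<close>

lemma badd_Bcar: "u \<in> Bcar m \<Longrightarrow> v \<in> Bcar m \<Longrightarrow> badd u v \<in> Bcar m"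
  by (auto simp: Bcar_def badd_def)

lemma bzero_Bcar: "bzero \<in> Bcar m"
  by (simp add: Bcar_def bzero_def)

lemma btrans_bzero: "btrans m bzero = id"
  by (auto simp: btrans_def rperm_def badd_def bzero_def)

lemma btrans_apply_bzero: "btrans m v bzero = v"
  using bzero_Bcar by (simp add: btrans_def rperm_def badd_def bzero_def)

lemma btrans_comp:
  "u \<in> Bcar m \<Longrightarrow> v \<in> Bcar m \<Longrightarrow> btrans m u \<circ> btrans m v = btrans m (badd v u)"
  by (rule ext) (auto simp: btrans_def rperm_def badd_Bcar, auto simp: badd_def)

lemma inv_btrans:
  assumes "v \<in> Bcar m"
  shows "inv (btrans m v) = btrans m v"
proof (rule inv_unique_comp)
  have "badd v v = bzero" by (simp add: badd_def bzero_def)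
  then show "btrans m v \<circ> btrans m v = id"
    using btrans_comp[OF assms assms] btrans_bzero by simp
  then show "btrans m v \<circ> btrans m v = id" .
qed

lemma perm_gen_subset_BT:
  assumes "S \<subseteq> BT m"
  shows "perm_gen S \<subseteq> BT m"
proof
  fix f assume "f \<in> perm_gen S"
  then show "f \<in> BT m"
  proof (induction f rule: perm_gen.induct)
    case gen_id
    have "btrans m bzero \<in> BT m" using bzero_Bcar by (simp add: BT_def)
    then show ?case by (simp only: btrans_bzero)
  next
    case (gen_base s)
    then show ?case using assms by blast
  next
    case (gen_comp a b)
    then obtain u v where "u \<in> Bcar m" "v \<in> Bcar m" "a = btrans m u" "b = btrans m v"
      by (auto simp: BT_def)
    then show ?case using btrans_comp badd_Bcar by (metis BT_def image_eqI)
  next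
    case (gen_inv a)
    then show ?case using inv_btrans by (auto simp: BT_def)
  qed
qed

lemma conj_btrans:
  assumes p: "p permutes Bcar m"
    and add: "\<forall>x\<in>Bcar m. \<forall>y\<in>Bcar m. p (badd x y) = badd (p x) (p y)"
    and v: "v \<in> Bcar m"
  shows "inv p \<circ> btrans m v \<circ> p = btrans m (inv p v)"
proof
  fix x
  have ip: "inv p permutes Bcar m" using permutes_inv[OF p] .
  have iv: "inv p v \<in> Bcar m" using permutes_in_image[OF ip] v by simp
  show "(inv p \<circ> btrans m v \<circ> p) x = btrans m (inv p v) x"
  proof (cases "x \<in> Bcar m")
    case True
    have px: "p x \<in> Bcar m" using permutes_in_image[OF p] True by simp
    have "p (badd x (inv p v)) = badd (p x) v"
      using add True iv permutes_inverses[OF p] by metis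
    then have "inv p (badd (p x) v) = badd x (inv p v)"
      using permutes_inv_eq[OF p] by metis
    then show ?thesis using True px badd_Bcar[OF px v]
      by (simp add: btrans_def rperm_def)
  next
    case False
    then show ?thesis using permutes_not_in[OF p False] permutes_not_in[OF ip False]
      by (simp add: btrans_def rperm_def)
  qed
qed

lemma perm_gen_BT_conj_additive:
  assumes "p permutes Bcar m"
    and "\<forall>x\<in>Bcar m. \<forall>y\<in>Bcar m. p (badd x y) = badd (p x) (p y)"
  shows "perm_gen (BT m \<union> {inv p \<circ> t \<circ> p | t. t \<in> BT m}) \<subseteq> BT m"
proof (rule perm_gen_subset_BT)
  have "inv p v \<in> Bcar m" if "v \<in> Bcar m" for v
    using that permutes_in_image[OF permutes_inv[OF assms(1)]] by simp
  then show "BT m \<union> {inv p \<circ> t \<circ> p | t. t \<in> BT m} \<subseteq> BT m"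
    using conj_btrans[OF assms] by (auto simp: BT_def)
qed

text \<open>The 3-cycle on the vectors e_0, e_1, e_0 + e_1 is even and fixes zero.\<close>
lemma Alt_not_subset_BT:
  assumes "2 \<le> m"
  shows "\<not> Alt (Bcar m) \<subseteq> BT m"
proof
  assume sub: "Alt (Bcar m) \<subseteq> BT m"
  define a :: bvec where "a = (\<lambda>j. j = 0)"
  define b :: bvec where "b = (\<lambda>j. j = 1)"
  define c :: bvec where "c = (\<lambda>j. j = 0 \<or> j = 1)"
  have abc: "a \<in> Bcar m" "b \<in> Bcar m" "c \<in> Bcar m"
    using assms by (auto simp: a_def b_def c_def Bcar_def)
  have dist: "a \<noteq> b" "b \<noteq> c" "a \<noteq> c" "a \<noteq> bzero" "b \<noteq> bzero" "c \<noteq> bzero"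
    by (auto simp: a_def b_def c_def bzero_def fun_eq_iff)
  define p where "p = transpose a b \<circ> transpose b c"
  have "p \<in> Alt (Bcar m)"
    unfolding Alt_def p_def using abc dist
    by (auto simp: evenperm_comp permutation_swap_id evenperm_swap
        intro: permutes_compose permutes_swap_id)
  with sub obtain v where "p = btrans m v" by (auto simp: BT_def)
  moreover have "p bzero = bzero" using dist by (simp add: p_def transpose_def)
  ultimately have "p = id" using btrans_apply_bzero btrans_bzero by metis
  moreover have "p c = a" using dist by (simp add: p_def transpose_def)
  ultimately show False using dist by simp
qed

lemma vadd_Vcar: "x \<in> Vcar m n \<Longrightarrow> y \<in> Vcar m n \<Longrightarrow> vadd x y \<in> Vcar m n"
  by (auto simp: Vcar_def vadd_def)

lemma vzero_Vcar: "vzero \<in> Vcar m n"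
  by (simp add: Vcar_def vzero_def)

lemma additive_vzero:
  assumes "\<forall>x\<in>Vcar m n. \<forall>y\<in>Vcar m n. L (vadd x y) = vadd (L x) (L y)"
  shows "L vzero = vzero"
proof -
  have "vadd vzero vzero = vzero" by (simp add: vadd_def vzero_def)
  then have "L vzero = vadd (L vzero) (L vzero)" using assms vzero_Vcar by metis
  then show ?thesis by (auto simp: vadd_def vzero_def fun_eq_iff)
qed

lemma bricklayer_Vcar:
  assumes "\<forall>i<n. g i permutes Bcar m" and "x \<in> Vcar m n"
  shows "bricklayer m n g x \<in> Vcar m n"
proof -
  have "g i (x i) \<in> Bcar m" if "i < n" for i
    using assms that permutes_in_image[of "g i" "Bcar m" "x i"]
    by (auto simp: Vcar_def Bcar_def)
  then show ?thesis using assms(2)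
    by (auto simp: bricklayer_def rperm_def Vcar_def Bcar_def bzero_def)
qed

lemma additive_if_affine_after:
  assumes lam: "GLV m n lam" and L: "GLV m n L" and b: "b \<in> Vcar m n"
    and B: "\<And>x. x \<in> Vcar m n \<Longrightarrow> B x \<in> Vcar m n" and B0: "B vzero = vzero"
    and eq: "\<And>x. x \<in> Vcar m n \<Longrightarrow> lam (B x) = vadd (L x) b"
  shows "\<forall>x\<in>Vcar m n. \<forall>y\<in>Vcar m n. B (vadd x y) = vadd (B x) (B y)"
proof (intro ballI)
  fix x y assume x: "x \<in> Vcar m n" and y: "y \<in> Vcar m n"
  have lam_add: "\<forall>x\<in>Vcar m n. \<forall>y\<in>Vcar m n. lam (vadd x y) = vadd (lam x) (lam y)"
    and L_add: "\<forall>x\<in>Vcar m n. \<forall>y\<in>Vcar m n. L (vadd x y) = vadd (L x) (L y)"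
    using lam L by (auto simp: GLV_def)
  have "b = vzero"
    using eq[OF vzero_Vcar] B0 additive_vzero[OF lam_add] additive_vzero[OF L_add]
    by (simp add: vadd_def vzero_def)
  then have lamB: "\<And>x. x \<in> Vcar m n \<Longrightarrow> lam (B x) = L x"
    using eq by (simp add: vadd_def vzero_def)
  have "lam (B (vadd x y)) = lam (vadd (B x) (B y))"
    using lamB[OF vadd_Vcar[OF x y]] lamB[OF x] lamB[OF y] L_add lam_add B x y by simp
  moreover have "inj_on lam (Vcar m n)" using lam by (simp add: GLV_def bij_betw_def)
  ultimately show "B (vadd x y) = vadd (B x) (B y)"
    using B[OF vadd_Vcar[OF x y]] vadd_Vcar[OF B[OF x] B[OF y]] by (meson inj_onD)
qed

lemma brick_additive_if_bricklayer_additive: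
  assumes "i < n"
    and add: "\<forall>x\<in>Vcar m n. \<forall>y\<in>Vcar m n.
      bricklayer m n g (vadd x y) = vadd (bricklayer m n g x) (bricklayer m n g y)"
  shows "\<forall>u\<in>Bcar m. \<forall>w\<in>Bcar m. g i (badd u w) = badd (g i u) (g i w)"
proof (intro ballI)
  fix u w assume u: "u \<in> Bcar m" and w: "w \<in> Bcar m"
  define emb where "emb = (\<lambda>u::bvec. \<lambda>i'. if i' = i then u else bzero)"
  have emb_Vcar: "emb v \<in> Vcar m n" if "v \<in> Bcar m" for v
    using assms(1) that by (auto simp: emb_def Vcar_def Bcar_def bzero_def)
  have brick: "bricklayer m n g (emb v) i = g i v" if "v \<in> Bcar m" for v
    using emb_Vcar[OF that] assms(1) by (simp add: bricklayer_def rperm_def emb_def)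
  have "emb (badd u w) = vadd (emb u) (emb w)"
    by (auto simp: emb_def vadd_def badd_def bzero_def fun_eq_iff)
  then have "g i (badd u w) = vadd (bricklayer m n g (emb u)) (bricklayer m n g (emb w)) i"
    using brick[OF badd_Bcar[OF u w]] add emb_Vcar[OF u] emb_Vcar[OF w] by metis
  also have "\<dots> = badd (g i u) (g i w)"
    using brick u w by (simp add: vadd_def badd_def)
  finally show "g i (badd u w) = badd (g i u) (g i w)" .
qed

lemma round_fun_zero_key:
  assumes "phi k h = vzero" and "x \<in> Vcar m n"
    and "\<forall>i<n. g h i permutes Bcar m" and "GLV m n (lam h)"
  shows "round_fun m n g lam phi k h x = lam h (bricklayer m n (g h) x)"
proof -
  have "lam h (bricklayer m n (g h) x) \<in> Vcar m n"
    using assms bricklayer_Vcar by (auto simp: GLV_def bij_betw_def)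
  then show ?thesis
    using assms by (simp add: round_fun_def rperm_def vtrans_def vadd_def vzero_def)
qed

theorem proposition4p2:
  fixes m n l :: nat and K :: "'k set"
    and g :: "nat \<Rightarrow> nat \<Rightarrow> bvec \<Rightarrow> bvec"
    and lam :: "nat \<Rightarrow> vvec \<Rightarrow> vvec"
    and phi :: "'k \<Rightarrow> nat \<Rightarrow> vvec"
    and h i :: nat
  assumes "tb_cipher m n l K g lam phi"
    and "3 \<le> m" and "2 \<le> n"
    and "h \<in> {1..l}" and "proper_round m n lam phi K h"
    and "i < n"
    and "Alt (Bcar m) \<subseteq> perm_gen (BT m \<union> {inv (g h i) \<circ> t \<circ> g h i | t. t \<in> BT m})"
    and "primitive_on (Vcar m n) (Gamma m n g lam phi K h)"
  shows "\<not> (Gamma m n g lam phi K h \<subseteq> AGL m n)"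
proof
  assume affine: "Gamma m n g lam phi K h \<subseteq> AGL m n"
  have bricks: "\<forall>i<n. g h i permutes Bcar m" and B0: "bricklayer m n (g h) vzero = vzero"
    and lam: "GLV m n (lam h)"
    using assms(1,4) by (auto simp: tb_cipher_def)
  obtain k where k: "k \<in> K" "phi k h = vzero"
    using assms(5) vzero_Vcar by (metis proper_round_def imageE)
  then have "round_fun m n g lam phi k h \<in> AGL m n"
    using affine by (auto simp: Gamma_def intro: perm_gen.gen_base)
  then obtain L b where L: "GLV m n L" and b: "b \<in> Vcar m n"
    and round: "\<And>x. x \<in> Vcar m n \<Longrightarrow> round_fun m n g lam phi k h x = vadd (L x) b"
    by (auto simp: AGL_def rperm_def)
  have layer: "lam h (bricklayer m n (g h) x) = vadd (L x) b" if "x \<in> Vcar m n" for x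
    using round[OF that] round_fun_zero_key[of phi k h x m n g lam] k(2) that bricks lam
    by simp
  have "\<forall>x\<in>Vcar m n. \<forall>y\<in>Vcar m n. bricklayer m n (g h) (vadd x y)
      = vadd (bricklayer m n (g h) x) (bricklayer m n (g h) y)"
    by (rule additive_if_affine_after[where B = "bricklayer m n (g h)",
          OF lam L b bricklayer_Vcar[OF bricks] B0 layer])
  then have "perm_gen (BT m \<union> {inv (g h i) \<circ> t \<circ> g h i | t. t \<in> BT m}) \<subseteq> BT m"
    using perm_gen_BT_conj_additive bricks assms(6) brick_additive_if_bricklayer_additive
    by blast
  then show False using assms(2,7) Alt_not_subset_BT[of m] by auto
qed

end
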